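(* No randomized mechanism that is universally truthful without money and with verification for CAs with known $2$-minded bidders has expected approximation ratio strictly less than $5/4$. This holds even restricted to instances with $n=2$ bidders and $m=2$ goods.
   Context: Combinatorial auction with a set $\mathsf U$ of $m$ goods (single copy each) and $n$ bidders; bidder $i$ has a public collection $\mathcal S_i$ of $k$ nonempty subsets of $\mathsf U$ (known bidders; here $k=2$) and a private valuation $v_i:\mathcal S_i\to\mathbb R_{\ge0}$, extended by $v_i(T)=\max\{v_i(S'):S'\in\mathcal S_i,S'\subseteq T\}$ ($0$ if none). A declaration is any valuation $b_i:\mathcal S_i\to\mathbb R_{\ge0}$. A deterministic mechanism maps declarations to pairwise disjoint sets with $A_i(\mathbf b)\in\mathcal S_i\cup\{\emptyset\}$. Verification: bidder $i$ with true valuation $v_i$ facing $\mathbf b_{-i}$ may declare $b_i$ only if $b_i(A_i(b_i,\mathbf b_{-i}))\le v_i(A_i(b_i,\mathbf b_{-i}))$. A deterministic mechanism is truthful without money and with verification if for all $i$, $\mathbf b_{-i}$, true $v_i$ and permitted $b_i$, $v_i(A_i(v_i,\mathbf b_{-i}))\ge v_i(A_i(b_i,\mathbf b_{-i}))$; a randomized mechanism is universally truthful if it is a probability distribution over such deterministic mechanisms. Expected approximation ratio $\alpha$: on every truthful input, the expected social welfare is at least $\mathrm{OPT}/\alpha$, where $\mathrm{OPT}$ is the maximum welfare of a feasible allocation. *)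

theory Defs
  imports "HOL-Probability.Probability"
begin

text \<open>Bidders are the elements of a finite type 'b, goods the elements of a finite
type 'g (so U = UNIV). A collection profile S assigns to each bidder its public
collection of desired bundles; a declaration profile b assigns to each bidder a
valuation on its collection (represented as a function on all bundles that is 0
outside the collection).\<close>

definition valid_coll :: "('b::finite \<Rightarrow> 'g::finite set set) \<Rightarrow> bool" where
  "valid_coll S \<longleftrightarrow> (\<forall>i. card (S i) = 2 \<and> {} \<notin> S i)"

definition valid_decl :: "('b::finite \<Rightarrow> 'g::finite set set) \<Rightarrow> ('b \<Rightarrow> 'g set \<Rightarrow> real) \<Rightarrow> bool" where
  "valid_decl S b \<longleftrightarrow> (\<forall>i T. 0 \<le> b i T \<and> (T \<notin> S i \<longrightarrow> b i T = 0))"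

definition ext_val :: "('b::finite \<Rightarrow> 'g::finite set set) \<Rightarrow> ('b \<Rightarrow> 'g set \<Rightarrow> real) \<Rightarrow> 'b \<Rightarrow> 'g set \<Rightarrow> real" where
  "ext_val S b i T = Max (insert 0 {b i S' | S'. S' \<in> S i \<and> S' \<subseteq> T})"

definition feasible :: "('b::finite \<Rightarrow> 'g::finite set set) \<Rightarrow> ('b \<Rightarrow> 'g set) \<Rightarrow> bool" where
  "feasible S A \<longleftrightarrow> (\<forall>i. A i \<in> S i \<union> {{}}) \<and> (\<forall>i j. i \<noteq> j \<longrightarrow> A i \<inter> A j = {})"

definition welfare :: "('b::finite \<Rightarrow> 'g::finite set set) \<Rightarrow> ('b \<Rightarrow> 'g set \<Rightarrow> real) \<Rightarrow> ('b \<Rightarrow> 'g set) \<Rightarrow> real" where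
  "welfare S v A = (\<Sum>i\<in>UNIV. ext_val S v i (A i))"

definition opt :: "('b::finite \<Rightarrow> 'g::finite set set) \<Rightarrow> ('b \<Rightarrow> 'g set \<Rightarrow> real) \<Rightarrow> real" where
  "opt S v = Max {welfare S v A | A. feasible S A}"

type_synonym ('b, 'g) mech = "('b \<Rightarrow> 'g set set) \<Rightarrow> ('b \<Rightarrow> 'g set \<Rightarrow> real) \<Rightarrow> 'b \<Rightarrow> 'g set"

definition det_mech :: "('b::finite, 'g::finite) mech \<Rightarrow> bool" where
  "det_mech M \<longleftrightarrow> (\<forall>S b. valid_coll S \<and> valid_decl S b \<longrightarrow> feasible S (M S b))"

text \<open>Truthful without money and with verification: a bidder with true valuation vi,
facing b_{-i}, may declare bi only if bi(A_i) <= vi(A_i) for the resulting bundle;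
every permitted declaration yields no more true value than truth-telling.\<close>
definition truthful_verif :: "('b::finite, 'g::finite) mech \<Rightarrow> bool" where
  "truthful_verif M \<longleftrightarrow> det_mech M \<and>
     (\<forall>S b i vi bi. valid_coll S \<longrightarrow> valid_decl S (b(i := vi)) \<longrightarrow> valid_decl S (b(i := bi)) \<longrightarrow>
        ext_val S (b(i := bi)) i (M S (b(i := bi)) i) \<le> ext_val S (b(i := vi)) i (M S (b(i := bi)) i) \<longrightarrow>
        ext_val S (b(i := vi)) i (M S (b(i := bi)) i) \<le> ext_val S (b(i := vi)) i (M S (b(i := vi)) i))"

end

theory Submission
  imports Defs
begin

text \<open>Both bidders want either of the two goods g1, g2 as a singleton. In instance 1 bidder 1
values only g1 (at 5) and bidder 2 values g1, g2 at 5, 4; the optimum 9 gives g1 to bidder 1.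
In instance 2 bidder 1 values g1, g2 at 5, 4 and bidder 2 only g1 (at 4); the optimum 8 gives
g1 to bidder 2. Both instances are underbids of the symmetric profile in which both bidders
value g1, g2 at 5, 4, so a truthful mechanism optimal on both instances would have to give g1
to both bidders in the symmetric profile. Hence every truthful deterministic mechanism achieves
welfare at most 5 on one of the instances, so 3 w1 + 4 w2 \<le> 47 for its welfares w1, w2.
Averaging over the mechanism yields 3 \<cdot> 9 + 4 \<cdot> 8 \<le> 47 \<alpha>, i.e. \<alpha> \<ge> 59/47 > 5/4.\<close>

lemma ext_val_nonneg: "0 \<le> ext_val S v i T"
  unfolding ext_val_def by (rule Max_ge) auto

lemma ext_val_eq_of_minimal:
  assumes "valid_decl S v" and "\<forall>S'\<in>S i. S' \<subseteq> T \<longrightarrow> S' = T"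
  shows "ext_val S v i T = v i T"
proof (cases "T \<in> S i")
  case True
  then have "{v i S' | S'. S' \<in> S i \<and> S' \<subseteq> T} = {v i T}" using assms(2) by auto
  then show ?thesis using assms(1) unfolding ext_val_def valid_decl_def by auto
next
  case False
  then have none: "{v i S' | S'. S' \<in> S i \<and> S' \<subseteq> T} = {}" using assms(2) by auto
  have "v i T = 0" using False assms(1) unfolding valid_decl_def by simp
  then show ?thesis unfolding ext_val_def none by simp
qed

lemma welfare_nonneg: "0 \<le> welfare S v A"
  unfolding welfare_def by (simp add: ext_val_nonneg sum_nonneg)

lemma welfare_le_opt:
  assumes "feasible S A"
  shows "welfare S v A \<le> opt S v"
proof -
  have "{welfare S v A | A. feasible S A} \<subseteq> range (welfare S v)" by blast
  then have "finite {welfare S v A | A. feasible S A}" by (rule finite_subset) simp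
  then show ?thesis unfolding opt_def using assms by (auto intro: Max_ge)
qed

lemma integrable_welfare:
  assumes "prob_space P" and "\<forall>M\<in>space P. det_mech M"
    and "valid_coll S" and "valid_decl S v"
    and "(\<lambda>M. welfare S v (M S v)) \<in> borel_measurable P"
  shows "integrable P (\<lambda>M. welfare S v (M S v))"
proof -
  interpret prob_space P by (fact assms(1))
  have "\<bar>welfare S v (M S v)\<bar> \<le> opt S v" if "M \<in> space P" for M
  proof -
    have "feasible S (M S v)" using assms(2-4) that unfolding det_mech_def by blast
    then show ?thesis by (simp add: abs_of_nonneg welfare_nonneg welfare_le_opt)
  qed
  then show ?thesis by (intro integrable_const_bound[where B = "opt S v"]) (auto simp: assms(5))
qed

lemma truthful_verif_feasible:
  assumes "truthful_verif M" and "valid_coll S" and "valid_decl S v"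
  shows "feasible S (M S v)"
  using assms unfolding truthful_verif_def det_mech_def by blast

lemma truthful_verifD:
  assumes "truthful_verif M" and "valid_coll S" and "valid_decl S v" and "valid_decl S (v(i := bi))"
    and "ext_val S (v(i := bi)) i (M S (v(i := bi)) i) \<le> ext_val S v i (M S (v(i := bi)) i)"
  shows "ext_val S v i (M S (v(i := bi)) i) \<le> ext_val S v i (M S v i)"
  using assms(1)[unfolded truthful_verif_def, THEN conjunct2, rule_format, of S v i "v i" bi]
    assms(2-5)
  by simp

lemma opt_combination_le_ratio:
  fixes a b c \<alpha> :: real
  assumes "prob_space P" and "\<forall>M\<in>space P. det_mech M" and "valid_coll S"
    and decl: "valid_decl S v" "valid_decl S w"
    and meas: "(\<lambda>M. welfare S v (M S v)) \<in> borel_measurable P"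
      "(\<lambda>M. welfare S w (M S w)) \<in> borel_measurable P"
    and "\<alpha> > 0" and "a \<ge> 0" and "b \<ge> 0"
    and approx: "opt S v / \<alpha> \<le> (\<integral>M. welfare S v (M S v) \<partial>P)"
      "opt S w / \<alpha> \<le> (\<integral>M. welfare S w (M S w) \<partial>P)"
    and bound: "\<forall>M\<in>space P. a * welfare S v (M S v) + b * welfare S w (M S w) \<le> c"
  shows "a * opt S v + b * opt S w \<le> c * \<alpha>"
proof -
  interpret prob_space P by (fact assms(1))
  note int_v = integrable_welfare[OF assms(1-3) decl(1) meas(1)]
  note int_w = integrable_welfare[OF assms(1-3) decl(2) meas(2)]
  have "a * (opt S v / \<alpha>) + b * (opt S w / \<alpha>)
      \<le> a * (\<integral>M. welfare S v (M S v) \<partial>P) + b * (\<integral>M. welfare S w (M S w) \<partial>P)"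
    using approx \<open>a \<ge> 0\<close> \<open>b \<ge> 0\<close> by (intro add_mono mult_left_mono)
  also have "\<dots> = (\<integral>M. a * welfare S v (M S v) + b * welfare S w (M S w) \<partial>P)"
    using int_v int_w by simp
  also have "\<dots> \<le> c"
    using int_v int_w bound by (intro integral_le_const) auto
  finally show ?thesis using \<open>\<alpha> > 0\<close> by (simp add: field_simps)
qed

locale two_bidders_two_goods =
  fixes b1 b2 :: "'b::finite" and g1 g2 :: "'g::finite"
  assumes bidders: "b1 \<noteq> b2" "UNIV = {b1, b2}"
    and goods: "g1 \<noteq> g2"
begin

definition singletons :: "'b \<Rightarrow> 'g set set" where
  "singletons = (\<lambda>_. {{g1}, {g2}})"

definition singleton_val :: "real \<Rightarrow> real \<Rightarrow> 'g set \<Rightarrow> real" where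
  "singleton_val x y T = (if T = {g1} then x else if T = {g2} then y else 0)"

definition sym_profile :: "'b \<Rightarrow> 'g set \<Rightarrow> real" where
  "sym_profile = (\<lambda>_. singleton_val 5 4)"

definition profile1 :: "'b \<Rightarrow> 'g set \<Rightarrow> real" where
  "profile1 = sym_profile(b1 := singleton_val 5 0)"

definition profile2 :: "'b \<Rightarrow> 'g set \<Rightarrow> real" where
  "profile2 = sym_profile(b2 := singleton_val 4 0)"

lemma bidder_cases: "i = b1 \<or> i = b2"
  using bidders(2) by blast

lemma valid_coll_singletons: "valid_coll singletons"
  using goods unfolding valid_coll_def singletons_def by auto

lemma valid_decl_singleton_val_update:
  assumes "valid_decl singletons v" and "0 \<le> x" and "0 \<le> y"
  shows "valid_decl singletons (v(i := singleton_val x y))"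
  using assms unfolding valid_decl_def singletons_def singleton_val_def by auto

lemma valid_decl_sym_profile: "valid_decl singletons sym_profile"
  unfolding valid_decl_def singletons_def sym_profile_def singleton_val_def by auto

lemma valid_decl_profile1: "valid_decl singletons profile1"
  unfolding profile1_def by (intro valid_decl_singleton_val_update valid_decl_sym_profile) auto

lemma valid_decl_profile2: "valid_decl singletons profile2"
  unfolding profile2_def by (intro valid_decl_singleton_val_update valid_decl_sym_profile) auto

lemma feasible_singletonsD:
  assumes "feasible singletons A"
  shows "A b1 = {} \<or> A b1 = {g1} \<or> A b1 = {g2}" "A b2 = {} \<or> A b2 = {g1} \<or> A b2 = {g2}"
    and "A b1 \<inter> A b2 = {}"
  using assms bidders(1) unfolding feasible_def singletons_def by auto

lemma feasible_singletonsI: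
  assumes "A b1 \<in> {{}, {g1}, {g2}}" "A b2 \<in> {{}, {g1}, {g2}}" "A b1 \<inter> A b2 = {}"
  shows "feasible singletons A"
  unfolding feasible_def
proof (intro conjI allI impI)
  fix i show "A i \<in> singletons i \<union> {{}}"
    using bidder_cases[of i] assms(1,2) by (auto simp: singletons_def)
next
  fix i j :: 'b assume "i \<noteq> j"
  then consider "i = b1" "j = b2" | "i = b2" "j = b1"
    using bidder_cases[of i] bidder_cases[of j] by blast
  then show "A i \<inter> A j = {}" by cases (use assms(3) in blast)+
qed

lemma ext_val_singletons:
  assumes "valid_decl singletons v" and "T \<in> {{}, {g1}, {g2}}"
  shows "ext_val singletons v i T = v i T"
  using assms goods by (intro ext_val_eq_of_minimal) (auto simp: singletons_def)

lemma welfare_singletons: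
  assumes "valid_decl singletons v" and "feasible singletons A"
  shows "welfare singletons v A = v b1 (A b1) + v b2 (A b2)"
proof -
  have "A i \<in> {{}, {g1}, {g2}}" for i
    using assms(2) unfolding feasible_def singletons_def by auto
  then show ?thesis
    unfolding welfare_def bidders(2) using bidders(1) assms(1) by (simp add: ext_val_singletons)
qed

lemma opt_profile1: "9 \<le> opt singletons profile1"
proof -
  define A where "A = (\<lambda>i. if i = b1 then {g1} else {g2})"
  have feasible: "feasible singletons A"
    using bidders(1) goods by (intro feasible_singletonsI) (auto simp: A_def)
  have "welfare singletons profile1 A = 9"
    using bidders(1) goods
    by (simp add: welfare_singletons[OF valid_decl_profile1 feasible])
       (simp add: A_def profile1_def sym_profile_def singleton_val_def)
  then show ?thesis using welfare_le_opt[OF feasible, of profile1] by simp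
qed

lemma opt_profile2: "8 \<le> opt singletons profile2"
proof -
  define A where "A = (\<lambda>i. if i = b1 then {g2} else {g1})"
  have feasible: "feasible singletons A"
    using bidders(1) goods by (intro feasible_singletonsI) (auto simp: A_def)
  have "welfare singletons profile2 A = 8"
    using bidders(1) goods
    by (simp add: welfare_singletons[OF valid_decl_profile2 feasible])
       (simp add: A_def profile2_def sym_profile_def singleton_val_def)
  then show ?thesis using welfare_le_opt[OF feasible, of profile2] by simp
qed

text \<open>Verification permits the underbid because it wins g1, whose declared value x does not
exceed the true value x'.\<close>

lemma truthful_wins_g1_if_underbid_wins:
  assumes "truthful_verif M" and "valid_decl singletons v"
    and "v i = singleton_val x' y'" and "0 \<le> x" "x \<le> x'" "0 \<le> y'" "y' < x'"
    and "M singletons (v(i := singleton_val x 0)) i = {g1}"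
  shows "M singletons v i = {g1}"
proof -
  let ?u = "v(i := singleton_val x 0)"
  have valid_u: "valid_decl singletons ?u"
    using assms(2,4) by (rule valid_decl_singleton_val_update) simp
  have awarded: "M singletons v i \<in> {{}, {g1}, {g2}}"
    using truthful_verif_feasible[OF assms(1) valid_coll_singletons assms(2)]
    unfolding feasible_def singletons_def by auto
  have "ext_val singletons ?u i (M singletons ?u i) \<le> ext_val singletons v i (M singletons ?u i)"
    using assms(2,3,5,8) valid_u by (simp add: ext_val_singletons singleton_val_def)
  then have "ext_val singletons v i (M singletons ?u i) \<le> ext_val singletons v i (M singletons v i)"
    by (rule truthful_verifD[OF assms(1) valid_coll_singletons assms(2) valid_u])
  then have won: "x' \<le> v i (M singletons v i)"
    using assms(2,3,8) awarded by (simp add: ext_val_singletons singleton_val_def)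
  have losing: "v i {} < x'" "v i {g2} < x'"
    using assms(3,6,7) goods by (simp_all add: singleton_val_def)
  from awarded consider
    "M singletons v i = {}" | "M singletons v i = {g1}" | "M singletons v i = {g2}"
    by blast
  then show ?thesis using won losing by cases simp_all
qed

lemma truthful_not_optimal_on_both:
  assumes "truthful_verif M"
  shows "\<not> (M singletons profile1 b1 = {g1} \<and> M singletons profile2 b2 = {g1})"
proof
  assume wins: "M singletons profile1 b1 = {g1} \<and> M singletons profile2 b2 = {g1}"
  have "M singletons sym_profile b1 = {g1}"
    using wins unfolding profile1_def
    by (intro truthful_wins_g1_if_underbid_wins[OF assms valid_decl_sym_profile,
          where x = 5 and x' = 5 and y' = 4])
       (simp_all add: sym_profile_def)
  moreover have "M singletons sym_profile b2 = {g1}"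
    using wins unfolding profile2_def
    by (intro truthful_wins_g1_if_underbid_wins[OF assms valid_decl_sym_profile,
          where x = 4 and x' = 5 and y' = 4])
       (simp_all add: sym_profile_def)
  moreover have "M singletons sym_profile b1 \<inter> M singletons sym_profile b2 = {}"
    using truthful_verif_feasible[OF assms valid_coll_singletons valid_decl_sym_profile] bidders(1)
    unfolding feasible_def by simp
  ultimately show False by simp
qed

lemma truthful_weighted_welfare_bound:
  assumes "truthful_verif M"
  shows "3 * welfare singletons profile1 (M singletons profile1)
       + 4 * welfare singletons profile2 (M singletons profile2) \<le> 47"
proof -
  note feasible1 = truthful_verif_feasible[OF assms valid_coll_singletons valid_decl_profile1]
  note feasible2 = truthful_verif_feasible[OF assms valid_coll_singletons valid_decl_profile2]
  have vals: "profile1 b1 = singleton_val 5 0" "profile1 b2 = singleton_val 5 4"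
    "profile2 b1 = singleton_val 5 4" "profile2 b2 = singleton_val 4 0"
    using bidders(1) by (auto simp: profile1_def profile2_def sym_profile_def)
  have w1: "welfare singletons profile1 (M singletons profile1)
      \<le> (if M singletons profile1 b1 = {g1} then 9 else 5)"
    using feasible_singletonsD[OF feasible1] goods
    by (elim disjE)
      (simp_all add: welfare_singletons[OF valid_decl_profile1 feasible1] vals singleton_val_def)
  have w2: "welfare singletons profile2 (M singletons profile2)
      \<le> (if M singletons profile2 b2 = {g1} then 8 else 5)"
    using feasible_singletonsD[OF feasible2] goods
    by (elim disjE)
      (simp_all add: welfare_singletons[OF valid_decl_profile2 feasible2] vals singleton_val_def)
  show ?thesis
  proof (cases "M singletons profile1 b1 = {g1}")
    case True
    then have "M singletons profile2 b2 \<noteq> {g1}"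
      using truthful_not_optimal_on_both[OF assms] by blast
    then show ?thesis using w1 w2 True by simp
  next
    case False
    then show ?thesis using w1 w2 by (simp split: if_splits)
  qed
qed

end

theorem theorem12:
  fixes P :: "('b::finite, 'g::finite) mech measure" and \<alpha> :: real
  assumes "CARD('b) = 2" and "CARD('g) = 2"
    and "prob_space P"
    and "\<forall>M\<in>space P. truthful_verif M"
    and "\<forall>S v. valid_coll S \<and> valid_decl S v \<longrightarrow> (\<lambda>M. welfare S v (M S v)) \<in> borel_measurable P"
    and "\<alpha> > 0"
    and "\<forall>S v. valid_coll S \<and> valid_decl S v \<longrightarrow> opt S v / \<alpha> \<le> (\<integral>M. welfare S v (M S v) \<partial>P)"
  shows "\<alpha> \<ge> 5 / 4"
proof -
  obtain b1 b2 :: 'b where "b1 \<noteq> b2" "UNIV = {b1, b2}"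
    using assms(1) card_2_iff by metis
  moreover obtain g1 g2 :: 'g where "g1 \<noteq> g2"
    using assms(2) card_2_iff by metis
  ultimately interpret two_bidders_two_goods b1 b2 g1 g2 by unfold_locales
  have "\<forall>M\<in>space P. det_mech M" using assms(4) unfolding truthful_verif_def by blast
  then have "3 * opt singletons profile1 + 4 * opt singletons profile2 \<le> 47 * \<alpha>"
    using assms(4-7) valid_coll_singletons valid_decl_profile1 valid_decl_profile2
      truthful_weighted_welfare_bound
    by (intro opt_combination_le_ratio[OF assms(3)]) simp_all
  then show ?thesis using opt_profile1 opt_profile2 by linarith
qed

end
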